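(* For every $U\in\mathcal U_n$ there is exactly one sequence $w$ which is the area sequence of a Dyck path of length $n$ and such that $P(w)$ is isomorphic to $U$ as a poset; moreover this sequence equals $q(U)$.
   Context: A unit interval order on $\{1,\dots,n\}$ is a relation $\prec$ such that there are closed intervals $I_1,\dots,I_n$ of length $1$ in $\mathbb R$, numbered from left to right, with $i\prec j$ iff $I_i$ lies strictly to the left of $I_j$; $\mathcal U_n$ is the set of these. Area sequences of Dyck paths of length $n$ are the sequences $(a_1,\dots,a_n)$ of nonnegative integers with $a_1=0$ and $a_i\le a_{i-1}+1$. For a sequence $w=(w_1,\dots,w_n)$ of nonnegative integers, $P(w)$ is the poset on $\{1,\dots,n\}$ with $i\prec j$ iff $w_j-w_i\ge2$, or $w_j-w_i=1$ and $i<j$. Levels: $\ell(1)=0$ and $\ell(j)=\max_{i\prec j}\ell(i)+1$ for $j\ge2$, with $\ell(j)=0$ if no $i\prec j$. Algorithm: $q_1=(0)$; given $q_{i-1}$, let $C_i$ be the number of $k\prec i$ with $\ell(k)=\ell(i)-1$, and obtain $q_i$ by inserting a letter $\ell(i)$ into $q_{i-1}$ directly after the (possibly empty) run of letters $\ell(i)$ immediately following the $C_i$-th occurrence of the letter $\ell(i)-1$ (the 0-th occurrence meaning the start of the word); $q(U)=q_n$. *)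

theory Defs
  imports Complex_Main
begin

text \<open>Relations on the carrier {1..n} are sets of pairs; (i,j) \<in> R means i \<prec> j.\<close>

definition unit_interval_orders :: "nat \<Rightarrow> (nat \<times> nat) set set" where
  "unit_interval_orders n =
     {R. \<exists>x :: nat \<Rightarrow> real.
           (\<forall>i j. 1 \<le> i \<longrightarrow> i \<le> j \<longrightarrow> j \<le> n \<longrightarrow> x i \<le> x j) \<and>
           R = {(i, j). i \<in> {1..n} \<and> j \<in> {1..n} \<and> x i + 1 < x j}}"

text \<open>Area sequences of Dyck paths of length n, as lists (entry a_i is w ! (i-1)).\<close>
definition area_seq :: "nat \<Rightarrow> nat list \<Rightarrow> bool" where
  "area_seq n w \<longleftrightarrow> length w = n \<and> (n > 0 \<longrightarrow> w ! 0 = 0) \<and>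
     (\<forall>i. 0 < i \<longrightarrow> i < n \<longrightarrow> w ! i \<le> w ! (i - 1) + 1)"

definition Pw :: "nat list \<Rightarrow> (nat \<times> nat) set" where
  "Pw w = {(i, j). i \<in> {1..length w} \<and> j \<in> {1..length w} \<and>
      (int (w ! (j - 1)) - int (w ! (i - 1)) \<ge> 2 \<or>
       (int (w ! (j - 1)) - int (w ! (i - 1)) = 1 \<and> i < j))}"

definition poset_iso :: "nat \<Rightarrow> (nat \<times> nat) set \<Rightarrow> (nat \<times> nat) set \<Rightarrow> bool" where
  "poset_iso n R S \<longleftrightarrow> (\<exists>f. bij_betw f {1..n} {1..n} \<and>
      (\<forall>i\<in>{1..n}. \<forall>j\<in>{1..n}. (i, j) \<in> R \<longleftrightarrow> (f i, f j) \<in> S))"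

text \<open>Levels: list whose (j-1)-th entry is \<ell>(j). For unit interval orders i \<prec> j implies i < j,
  so the maximum over the predecessors only involves already computed levels.\<close>
fun levs :: "(nat \<times> nat) set \<Rightarrow> nat \<Rightarrow> nat list" where
  "levs R 0 = []"
| "levs R (Suc m) = (let L = levs R m in
     L @ [Max (insert 0 {Suc (L ! (i - 1)) | i. i \<in> {1..m} \<and> (i, Suc m) \<in> R})])"

definition lev :: "(nat \<times> nat) set \<Rightarrow> nat \<Rightarrow> nat" where
  "lev R j = levs R j ! (j - 1)"

text \<open>Position just after the c-th occurrence of letter a (0 for c = 0, the start of the word).\<close>
fun after_occ :: "nat \<Rightarrow> nat \<Rightarrow> nat list \<Rightarrow> nat" where
  "after_occ a 0 q = 0"
| "after_occ a (Suc c) [] = 0"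
| "after_occ a (Suc c) (x # xs) = Suc (if x = a then after_occ a c xs else after_occ a (Suc c) xs)"

definition insert_after_run :: "nat \<Rightarrow> nat \<Rightarrow> nat list \<Rightarrow> nat list" where
  "insert_after_run p b q =
     (let p' = p + length (takeWhile (\<lambda>x. x = b) (drop p q)) in take p' q @ [b] @ drop p' q)"

definition C_count :: "nat \<Rightarrow> (nat \<times> nat) set \<Rightarrow> nat \<Rightarrow> nat" where
  "C_count n R i = card {k \<in> {1..n}. (k, i) \<in> R \<and> int (lev R k) = int (lev R i) - 1}"

fun q_step :: "nat \<Rightarrow> (nat \<times> nat) set \<Rightarrow> nat \<Rightarrow> nat list" where
  "q_step n R 0 = []"
| "q_step n R (Suc 0) = [0]"
| "q_step n R (Suc (Suc m)) =
     (let i = Suc (Suc m); q = q_step n R (Suc m); l = lev R i in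
      (if l = 0 then insert_after_run 0 l q
       else insert_after_run (after_occ (l - 1) (C_count n R i) q) l q))"

definition qU :: "nat \<Rightarrow> (nat \<times> nat) set \<Rightarrow> nat list" where
  "qU n U = q_step n U n"

end

theory Submission
  imports Defs
begin

text \<open>
  List the elements of \<open>U\<close> in the order in which the algorithm writes their levels into \<open>q(U)\<close>.
  Such a listing \<open>e\<close> is canonical: its level word is an area sequence, elements of equal level
  appear in increasing order, and for \<open>u\<close>, \<open>v\<close> on consecutive levels \<open>u \<prec> v\<close> iff \<open>u\<close> comes
  first. In a unit interval order elements whose levels differ by at least two are comparable,
  so a canonical listing is an isomorphism from \<open>P\<close> of its level word onto \<open>U\<close>. Deleting the
  largest element \<open>i\<close> from a canonical listing leaves a canonical listing, and the place of \<open>i\<close> is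
  forced: behind exactly its predecessors one level below and behind all elements of its own
  level. In the level word this is the position chosen by the algorithm, so by induction
  canonical listings exist and their level word is \<open>q(U)\<close>.

  Conversely, \<open>P(w)\<close> is the interval order of the unit intervals starting at
  \<open>w\<^sub>p + p / (n + 1)\<close>. Numbering these from left to right presents \<open>P(w)\<close> as a unit interval
  order on \<open>{1..n}\<close>; being isomorphic to \<open>U\<close> it equals \<open>U\<close>, because a unit interval order is
  determined by the sizes of its up-sets, an antitone sequence. Listing the positions of \<open>w\<close> by
  this numbering gives a canonical listing with level word \<open>w\<close>, whence \<open>w = q(U)\<close>.
\<close>

section \<open>Area words and the insertion point of the algorithm\<close>

abbreviation area_steps :: "nat list \<Rightarrow> bool" where
  "area_steps \<equiv> successively (\<lambda>a b. b \<le> Suc a)"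

lemma area_seq_iff: "area_seq n w \<longleftrightarrow> length w = n \<and> (w \<noteq> [] \<longrightarrow> hd w = 0) \<and> area_steps w"
proof -
  have "(\<forall>i. 0 < i \<longrightarrow> i < length w \<longrightarrow> w ! i \<le> w ! (i - 1) + 1) \<longleftrightarrow> area_steps w"
    (is "?A \<longleftrightarrow> _")
  proof
    assume ?A then show "area_steps w"
      unfolding successively_conv_nth by (metis Suc_eq_plus1 diff_Suc_1 zero_less_Suc)
  next
    assume steps: "area_steps w"
    show ?A
    proof (intro allI impI)
      fix i assume "0 < i" "i < length w"
      then show "w ! i \<le> w ! (i - 1) + 1" using successively_nth[OF steps, of "i - 1"] by simp
    qed
  qed
  then show ?thesis unfolding area_seq_def by (auto simp: hd_conv_nth)
qed

lemma area_steps_drop: "area_steps w \<Longrightarrow> area_steps (drop p w)"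
  using successively_append_iff[of _ "take p w" "drop p w"] by simp

lemma area_steps_intermediate_value:
  "area_steps zs \<Longrightarrow> t < length zs \<Longrightarrow> zs ! 0 \<le> a \<Longrightarrow> a < zs ! t \<Longrightarrow> \<exists>s<t. zs ! s = a"
proof (induction zs arbitrary: t)
  case (Cons z zs)
  show ?case
  proof (cases "z = a")
    case False
    then obtain t' where t: "t = Suc t'"
      using Cons.prems by (cases t) auto
    with Cons.prems have "zs \<noteq> []" by auto
    have "zs ! 0 \<le> a"
      using Cons.prems(1,3) False \<open>zs \<noteq> []\<close> by (auto simp: successively_Cons hd_conv_nth)
    then obtain s where "s < t'" "zs ! s = a"
      using Cons.IH[of t'] Cons.prems t by (auto simp: successively_Cons)
    then show ?thesis using t by (intro exI[of _ "Suc s"]) auto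
  next
    case True
    with Cons.prems have "t \<noteq> 0" by (metis less_irrefl nth_Cons_0)
    with True show ?thesis by (intro exI[of _ 0]) simp
  qed
qed simp

lemma count_list_take_le: "count_list (take p xs) a \<le> count_list xs a"
  using count_list_append[of "take p xs" "drop p xs" a] by simp

lemma count_list_map_distinct:
  "distinct xs \<Longrightarrow> count_list (map f xs) a = card {k \<in> set xs. f k = a}"
proof (induction xs)
  case (Cons y ys)
  have "{k \<in> set (y # ys). f k = a} =
      (if f y = a then insert y {k \<in> set ys. f k = a} else {k \<in> set ys. f k = a})"
    by auto
  then show ?case using Cons by auto
qed simp

lemma after_occ_spec:
  assumes "1 \<le> C" "C \<le> count_list W a"
  defines "p \<equiv> after_occ a C W"
  shows "1 \<le> p" "p \<le> length W" "count_list (take p W) a = C" "W ! (p - 1) = a"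
proof -
  have "1 \<le> p \<and> p \<le> length W \<and> count_list (take p W) a = C \<and> W ! (p - 1) = a"
    using assms(1,2) unfolding p_def
  proof (induction a C W rule: after_occ.induct)
    case (3 a c x xs)
    show ?case
    proof (cases "x = a")
      case True
      then show ?thesis using 3(1) "3.prems" by (cases c; cases "after_occ a c xs") auto
    next
      case False
      then show ?thesis using 3(2) "3.prems" by (cases "after_occ a (Suc c) xs") auto
    qed
  qed simp_all
  then show "1 \<le> p" "p \<le> length W" "count_list (take p W) a = C" "W ! (p - 1) = a"
    by simp_all
qed

definition run_end :: "nat \<Rightarrow> nat \<Rightarrow> nat list \<Rightarrow> nat" where
  "run_end p b q = p + length (takeWhile (\<lambda>x. x = b) (drop p q))"

lemma insert_after_run_eq:
  "insert_after_run p b q = take (run_end p b q) q @ [b] @ drop (run_end p b q) q"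
  by (simp add: insert_after_run_def run_end_def Let_def)

lemma run_end_spec:
  fixes b :: nat
  assumes "p \<le> length W"
  defines "r \<equiv> run_end p b W"
  shows "p \<le> r" "r \<le> length W"
    "take r W = take p W @ takeWhile (\<lambda>x. x = b) (drop p W)"
    "r < length W \<Longrightarrow> W ! r \<noteq> b"
    "p < r \<Longrightarrow> W ! (r - 1) = b"
proof -
  let ?t = "takeWhile (\<lambda>x. x = b) (drop p W)"
  have len: "length ?t \<le> length W - p"
    using length_takeWhile_le[of _ "drop p W"] by simp
  show "p \<le> r" "r \<le> length W" using len assms by (simp_all add: r_def run_end_def)
  show "take r W = take p W @ ?t"
    using takeWhile_eq_take[of "\<lambda>x. x = b" "drop p W"] by (simp add: r_def run_end_def take_add)
  show "W ! r \<noteq> b" if "r < length W"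
    using nth_length_takeWhile[of "\<lambda>x. x = b" "drop p W"] that assms
    by (simp add: r_def run_end_def)
  show "W ! (r - 1) = b" if "p < r"
  proof -
    have pos: "0 < length ?t" using that by (simp add: r_def run_end_def)
    then have r: "r - 1 = p + (length ?t - 1)" unfolding r_def run_end_def by linarith
    have "?t ! (length ?t - 1) \<in> set ?t" using pos by (intro nth_mem) simp
    then have "?t ! (length ?t - 1) = b" by (blast dest: set_takeWhileD)
    moreover have "?t ! (length ?t - 1) = W ! (r - 1)"
      using pos assms(1) takeWhile_nth[of "length ?t - 1" "\<lambda>x. x = b" "drop p W"] r by simp
    ultimately show ?thesis by simp
  qed
qed

definition insertion_point :: "nat \<Rightarrow> nat \<Rightarrow> nat list \<Rightarrow> nat" where
  "insertion_point a C W = run_end (after_occ a C W) (Suc a) W"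

definition run_boundary :: "nat \<Rightarrow> nat list \<Rightarrow> nat \<Rightarrow> bool" where
  "run_boundary a W p \<longleftrightarrow> 1 \<le> p \<and> p \<le> length W \<and> W ! (p - 1) \<in> {a, Suc a}
     \<and> (p < length W \<longrightarrow> W ! p \<noteq> Suc a)"

lemma insertion_point_spec:
  assumes "1 \<le> C" "C \<le> count_list W a"
  shows "run_boundary a W (insertion_point a C W)"
    "count_list (take (insertion_point a C W) W) a = C"
proof -
  let ?p = "after_occ a C W"
  note A = after_occ_spec[OF assms]
  note R = run_end_spec[OF A(2), of "Suc a"]
  have "count_list (takeWhile (\<lambda>x. x = Suc a) xs) a = 0" for xs
    by (induction xs) auto
  then show "count_list (take (insertion_point a C W) W) a = C"
    using R(3) A(3) by (simp add: insertion_point_def)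
  have "W ! (insertion_point a C W - 1) \<in> {a, Suc a}"
    using R(1,5) A(4) unfolding insertion_point_def by (cases "?p < run_end ?p (Suc a) W") auto
  then show "run_boundary a W (insertion_point a C W)"
    using R(1,2,4) A(1) by (auto simp: run_boundary_def insertion_point_def)
qed

lemma count_list_take_less:
  assumes "p \<le> r" "r < p'" "p' \<le> length W" "W ! r = a"
  shows "count_list (take p W) a < count_list (take p' W) a"
proof -
  have "take p' W = take p W @ take (p' - p) (drop p W)"
    using assms by (metis le_add_diff_inverse order.trans less_imp_le take_add)
  moreover have "take (p' - p) (drop p W) ! (r - p) = a" "r - p < length (take (p' - p) (drop p W))"
    using assms by simp_all
  then have "count_list (take (p' - p) (drop p W)) a \<noteq> 0"
    by (metis nth_mem count_list_0_iff)
  ultimately show ?thesis by simp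
qed

lemma run_boundary_count_less:
  assumes steps: "area_steps W" and small: "\<forall>v\<in>set W. v \<le> Suc a"
    and "p < p'" "run_boundary a W p" "run_boundary a W p'"
  shows "count_list (take p W) a < count_list (take p' W) a"
proof -
  have "\<exists>r. p \<le> r \<and> r < p' \<and> W ! r = a"
  proof (cases "W ! (p' - 1) = a")
    case False
    then have "W ! (p' - 1) = Suc a" using assms(5) by (simp add: run_boundary_def)
    moreover have "W ! p \<le> a"
      using assms(3-5) small nth_mem[of p W] by (fastforce simp: run_boundary_def)
    moreover have "p' - 1 - p < length (drop p W)"
      using assms(3,5) by (auto simp: run_boundary_def)
    moreover have "area_steps (drop p W)" using steps by (rule area_steps_drop)
    ultimately obtain s where "s < p' - 1 - p" "drop p W ! s = a"
      using area_steps_intermediate_value[of "drop p W" "p' - 1 - p" a] assms(3) by auto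
    then show ?thesis using assms(3,5) by (intro exI[of _ "p + s"]) (auto simp: run_boundary_def)
  qed (use assms(3) in \<open>intro exI[of _ "p' - 1"]; auto\<close>)
  then show ?thesis
    using count_list_take_less[of p _ p' W a] assms(5) by (auto simp: run_boundary_def)
qed

lemma run_boundary_eq_insertion_point:
  assumes "area_steps W" "\<forall>v\<in>set W. v \<le> Suc a" "run_boundary a W p"
    and C: "C = count_list (take p W) a" "1 \<le> C"
  shows "p = insertion_point a C W"
proof -
  have "C \<le> count_list W a" using C count_list_take_le by simp
  note I = insertion_point_spec[OF C(2) this]
  show ?thesis
    using run_boundary_count_less[OF assms(1,2) _ assms(3) I(1)]
      run_boundary_count_less[OF assms(1,2) _ I(1) assms(3)] I(2) C(1)
    by (metis less_irrefl linorder_neqE_nat)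
qed

fun precedes :: "'a list \<Rightarrow> 'a \<Rightarrow> 'a \<Rightarrow> bool" where
  "precedes [] x y \<longleftrightarrow> False"
| "precedes (z # zs) x y \<longleftrightarrow> (z = x \<and> y \<in> set zs) \<or> precedes zs x y"

lemma precedes_append:
  "precedes (xs @ ys) x y \<longleftrightarrow> precedes xs x y \<or> precedes ys x y \<or> (x \<in> set xs \<and> y \<in> set ys)"
  by (induction xs) auto

lemma precedes_setD: "precedes xs x y \<Longrightarrow> x \<in> set xs \<and> y \<in> set xs"
  by (induction xs) auto

lemma precedes_filter: "precedes (filter P xs) x y \<longleftrightarrow> P x \<and> P y \<and> precedes xs x y"
  by (induction xs) auto

lemma precedes_total: "x \<in> set xs \<Longrightarrow> y \<in> set xs \<Longrightarrow> x \<noteq> y \<Longrightarrow> precedes xs x y \<or> precedes xs y x"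
  by (induction xs) auto

lemma precedes_nth_iff:
  "distinct xs \<Longrightarrow> i < length xs \<Longrightarrow> j < length xs \<Longrightarrow> precedes xs (xs ! i) (xs ! j) \<longleftrightarrow> i < j"
proof (induction xs arbitrary: i j)
  case (Cons z zs)
  have z: "z \<notin> set zs" "distinct zs" using Cons.prems(1) by simp_all
  show ?case
  proof (cases i)
    case 0
    then show ?thesis using z Cons.prems(3) by (cases j) (auto dest: precedes_setD)
  next
    case (Suc i')
    then have "zs ! i' \<noteq> z" "\<not> precedes zs (zs ! i') z"
      using z Cons.prems(2) by (auto dest: precedes_setD)
    then show ?thesis using Suc Cons.IH[OF z(2)] Cons.prems by (cases j) auto
  qed
qed simp

lemma precedes_insert:
  "precedes (xs @ z # ys) u v \<longleftrightarrow> precedes (xs @ ys) u v \<or> (u \<in> set xs \<and> v = z) \<or> (u = z \<and> v \<in> set ys)"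
  by (auto simp: precedes_append)

lemma precedes_inserted_iff:
  assumes "distinct (xs @ z # ys)"
  shows "precedes (xs @ z # ys) y z \<longleftrightarrow> y \<in> set xs"
  using assms by (auto simp: precedes_insert dest: precedes_setD)

lemma precedes_append_left:
  "distinct (xs @ ys) \<Longrightarrow> precedes (xs @ ys) y z \<Longrightarrow> z \<in> set xs \<Longrightarrow> y \<in> set xs"
  by (auto simp: precedes_append dest: precedes_setD)

lemma listing_of_bij_betw:
  assumes f: "bij_betw f {1..n} {1..n}"
  defines "e \<equiv> map f [1..<Suc n]"
  shows "distinct e" "set e = f ` {1..n}" "length e = n"
    "p \<in> {1..n} \<Longrightarrow> e ! (p - 1) = f p"
    "p \<in> {1..n} \<Longrightarrow> q \<in> {1..n} \<Longrightarrow> precedes e (f p) (f q) \<longleftrightarrow> p < q"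
proof -
  show set_e: "set e = f ` {1..n}"
    by (simp add: e_def atLeastLessThanSuc_atLeastAtMost del: upt_Suc)
  show dist: "distinct e"
    using bij_betw_imp_inj_on[OF f]
    by (simp add: e_def distinct_map atLeastLessThanSuc_atLeastAtMost del: upt_Suc)
  show len: "length e = n" by (simp add: e_def del: upt_Suc)
  show nth: "e ! (p - 1) = f p" if "p \<in> {1..n}" for p
  proof -
    have "p - 1 < length [1..<Suc n]" using that by auto
    then show ?thesis using that by (simp add: e_def nth_upt del: upt_Suc)
  qed
  show "precedes e (f p) (f q) \<longleftrightarrow> p < q" if "p \<in> {1..n}" "q \<in> {1..n}" for p q
  proof -
    have "p - 1 < length e" "q - 1 < length e" using that len by auto
    then have "precedes e (f p) (f q) \<longleftrightarrow> p - 1 < q - 1"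
      using precedes_nth_iff[OF dist] nth that by metis
    also have "\<dots> \<longleftrightarrow> p < q" using that by auto
    finally show ?thesis .
  qed
qed

lemma filter_le_insert:
  assumes "distinct (xs @ Suc m # ys)" "set (xs @ Suc m # ys) = {1..Suc m}"
  shows "filter (\<lambda>x. x \<le> m) (xs @ Suc m # ys) = xs @ ys"
proof -
  have "x \<le> m" if "x \<in> set xs \<union> set ys" for x
  proof -
    from that assms have "x \<in> {1..Suc m}" "x \<noteq> Suc m" by auto
    then show ?thesis by simp
  qed
  then show ?thesis by simp
qed

lemma filter_le_filter_le_Suc:
  "filter (\<lambda>x. x \<le> m) (filter (\<lambda>x. x \<le> Suc m) xs) = filter (\<lambda>x. x \<le> m) xs"
  unfolding filter_filter by (rule filter_cong) auto

lemma down_closed_subset_if_card_eq: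
  fixes S T :: "'a::linorder set"
  assumes "finite A" "S \<subseteq> A" "T \<subseteq> A"
    and S: "\<And>y z. y \<in> A \<Longrightarrow> z \<in> S \<Longrightarrow> y < z \<Longrightarrow> y \<in> S"
    and T: "\<And>y z. y \<in> A \<Longrightarrow> z \<in> T \<Longrightarrow> y < z \<Longrightarrow> y \<in> T"
    and "card S = card T"
  shows "T \<subseteq> S"
proof
  fix t assume t: "t \<in> T"
  show "t \<in> S"
  proof (rule ccontr)
    assume "t \<notin> S"
    have "S \<subseteq> T - {t}"
    proof
      fix y assume "y \<in> S"
      with \<open>t \<notin> S\<close> S[of t y] t assms(3) have "y < t" by (metis in_mono linorder_neqE)
      with T[of y t] t \<open>y \<in> S\<close> \<open>t \<notin> S\<close> assms(2) show "y \<in> T - {t}" by auto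
    qed
    moreover have "finite T" using assms(1,3) finite_subset by blast
    ultimately have "card S \<le> card (T - {t})" by (intro card_mono) auto
    also have "\<dots> < card T" using t \<open>finite T\<close> by (intro card_Diff1_less)
    finally have "card S < card T" .
    then show False using assms(6) by simp
  qed
qed

lemma down_closed_eqI:
  fixes S T :: "'a::linorder set"
  assumes "finite A" "S \<subseteq> A" "T \<subseteq> A"
    and "\<And>y z. y \<in> A \<Longrightarrow> z \<in> S \<Longrightarrow> y < z \<Longrightarrow> y \<in> S"
    and "\<And>y z. y \<in> A \<Longrightarrow> z \<in> T \<Longrightarrow> y < z \<Longrightarrow> y \<in> T"
    and "card S = card T"
  shows "S = T"
proof (rule subset_antisym)
  show "T \<subseteq> S" using assms by (rule down_closed_subset_if_card_eq)
  show "S \<subseteq> T" using assms(1,3,2,5,4) assms(6)[symmetric] by (rule down_closed_subset_if_card_eq)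
qed

lemma antimono_on_eq_if_bij_betw:
  fixes u v :: "'a::linorder \<Rightarrow> 'b::linorder"
  assumes "finite A" "antimono_on A u" "antimono_on A v" "bij_betw f A A"
    and uv: "\<And>i. i \<in> A \<Longrightarrow> v (f i) = u i"
  shows "i \<in> A \<Longrightarrow> u i = v i"
proof -
  define D where "D g t = {i \<in> A. t \<le> g i}" for g :: "'a \<Rightarrow> 'b" and t
  have down: "y \<in> D g t"
    if "antimono_on A g" "y \<in> A" "z \<in> D g t" "y < z" for g y z t
  proof -
    have "t \<le> g z" "z \<in> A" using that(3) by (simp_all add: D_def)
    moreover have "g z \<le> g y" using monotone_onD[OF that(1), of y z] that(2,4) \<open>z \<in> A\<close> by simp
    ultimately show ?thesis using that(2) order.trans by (fastforce simp: D_def)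
  qed
  have "D u t = D v t" for t
  proof (rule down_closed_eqI[OF assms(1)])
    show "D u t \<subseteq> A" "D v t \<subseteq> A" by (auto simp: D_def)
    show "y \<in> D u t" if "y \<in> A" "z \<in> D u t" "y < z" for y z using down[OF assms(2) that] .
    show "y \<in> D v t" if "y \<in> A" "z \<in> D v t" "y < z" for y z using down[OF assms(3) that] .
    have "f ` D u t = D v t"
    proof
      show "f ` D u t \<subseteq> D v t" using bij_betwE[OF assms(4)] uv by (auto simp: D_def)
      show "D v t \<subseteq> f ` D u t"
      proof
        fix i' assume i': "i' \<in> D v t"
        then have "i' \<in> f ` A" using bij_betw_imp_surj_on[OF assms(4)] by (simp add: D_def)
        then obtain i where "i \<in> A" "i' = f i" by blast
        then show "i' \<in> f ` D u t" using i' uv by (auto simp: D_def)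
      qed
    qed
    moreover have "inj_on f (D u t)"
      using bij_betw_imp_inj_on[OF assms(4)] by (rule inj_on_subset) (auto simp: D_def)
    ultimately show "card (D u t) = card (D v t)" using card_image by metis
  qed
  moreover assume "i \<in> A"
  then have "i \<in> D u (u i)" "i \<in> D v (v i)" by (simp_all add: D_def)
  ultimately have "v i \<le> u i" "u i \<le> v i" by (auto simp: D_def)
  then show "u i = v i" by simp
qed

lemma rank_less_iff:
  fixes key :: "'a \<Rightarrow> 'b::linorder"
  assumes "finite A" "inj_on key A" "p \<in> A" "q \<in> A"
  shows "card {r \<in> A. key r < key p} < card {r \<in> A. key r < key q} \<longleftrightarrow> key p < key q"
proof
  assume "key p < key q"
  then have "{r \<in> A. key r < key p} \<subset> {r \<in> A. key r < key q}" using assms(3) by auto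
  then show "card {r \<in> A. key r < key p} < card {r \<in> A. key r < key q}"
    using assms(1) by (intro psubset_card_mono) auto
next
  assume card: "card {r \<in> A. key r < key p} < card {r \<in> A. key r < key q}"
  show "key p < key q"
  proof (rule ccontr)
    assume "\<not> key p < key q"
    then have "{r \<in> A. key r < key q} \<subseteq> {r \<in> A. key r < key p}" by auto
    from card_mono[OF _ this] card assms(1) show False by simp
  qed
qed

lemma rank_bij_betw:
  fixes key :: "'a \<Rightarrow> 'b::linorder"
  assumes "finite A" "inj_on key A"
  shows "bij_betw (\<lambda>p. Suc (card {r \<in> A. key r < key p})) A {1..card A}"
proof -
  let ?rank = "\<lambda>p. Suc (card {r \<in> A. key r < key p})"
  have inj: "inj_on ?rank A"
  proof (rule inj_onI)
    fix p q assume "p \<in> A" "q \<in> A" "?rank p = ?rank q"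
    then have "\<not> key p < key q" "\<not> key q < key p"
      using rank_less_iff[OF assms, of p q] rank_less_iff[OF assms, of q p] by simp_all
    then have "key p = key q" by (meson linorder_less_linear)
    then show "p = q" using inj_onD[OF assms(2)] \<open>p \<in> A\<close> \<open>q \<in> A\<close> by blast
  qed
  moreover have "?rank ` A \<subseteq> {1..card A}"
  proof
    fix i assume "i \<in> ?rank ` A"
    then obtain p where p: "p \<in> A" "i = ?rank p" by blast
    then have "{r \<in> A. key r < key p} \<subseteq> A - {p}" by auto
    then have "card {r \<in> A. key r < key p} \<le> card (A - {p})"
      using assms(1) by (intro card_mono) auto
    then have "card {r \<in> A. key r < key p} \<le> card A - 1" using p(1) assms(1) by simp
    moreover have "card A \<noteq> 0" using p(1) assms(1) by auto
    ultimately show "i \<in> {1..card A}" using p(2) by simp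
  qed
  moreover have "card (?rank ` A) = card {1..card A}" using card_image[OF inj] by simp
  ultimately have "?rank ` A = {1..card A}" by (intro card_subset_eq) simp_all
  with inj show ?thesis unfolding bij_betw_def by simp
qed

section \<open>Levels in a unit interval order\<close>

lemma length_levs [simp]: "length (levs R m) = m"
  by (induction m) (simp_all add: Let_def)

lemma levs_nth: "i < m \<Longrightarrow> levs R m ! i = levs R (Suc i) ! i"
proof (induction m)
  case (Suc m)
  show ?case
  proof (cases "i = m")
    case False
    then have "i < m" using Suc.prems by simp
    then have "levs R (Suc m) ! i = levs R m ! i" by (simp add: Let_def nth_append)
    then show ?thesis using Suc.IH \<open>i < m\<close> by simp
  qed simp
qed simp

lemma lev_eq_Max:
  assumes "1 \<le> j"
  shows "lev R j = Max (insert 0 {Suc (lev R i) | i. i \<in> {1..j - 1} \<and> (i, j) \<in> R})"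
proof -
  have levs_lev: "levs R m ! (i - 1) = lev R i" if "1 \<le> i" "i \<le> m" for i m
    using that levs_nth[of "i - 1" m R] by (simp add: lev_def)
  obtain m where m: "j = Suc m" using assms by (cases j) auto
  have "lev R j = Max (insert 0 {Suc (levs R m ! (i - 1)) | i. i \<in> {1..m} \<and> (i, Suc m) \<in> R})"
    by (simp add: lev_def m Let_def nth_append)
  also have "{Suc (levs R m ! (i - 1)) | i. i \<in> {1..m} \<and> (i, Suc m) \<in> R}
      = {Suc (lev R i) | i. i \<in> {1..j - 1} \<and> (i, j) \<in> R}"
    using levs_lev[of _ m] m by force
  finally show ?thesis .
qed

lemma lev_1: "lev R (Suc 0) = 0"
  by (simp add: lev_def)

locale unit_interval_order =
  fixes n :: nat and U :: "(nat \<times> nat) set" and x :: "nat \<Rightarrow> real"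
  assumes mono: "\<And>i j. 1 \<le> i \<Longrightarrow> i \<le> j \<Longrightarrow> j \<le> n \<Longrightarrow> x i \<le> x j"
    and U_eq: "U = {(i, j). i \<in> {1..n} \<and> j \<in> {1..n} \<and> x i + 1 < x j}"

lemma unit_interval_orders_iff: "U \<in> unit_interval_orders n \<longleftrightarrow> (\<exists>x. unit_interval_order n U x)"
  unfolding unit_interval_orders_def unit_interval_order_def by blast

context unit_interval_order
begin

lemma U_iff: "(i, j) \<in> U \<longleftrightarrow> 1 \<le> i \<and> i \<le> n \<and> 1 \<le> j \<and> j \<le> n \<and> x i + 1 < x j"
  using U_eq by auto

lemma U_less: "(i, j) \<in> U \<Longrightarrow> i < j \<and> 1 \<le> i \<and> j \<le> n"
proof -
  assume "(i, j) \<in> U"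
  then have "1 \<le> i" "i \<le> n" "1 \<le> j" "j \<le> n" "x i + 1 < x j" using U_iff by auto
  moreover have "j \<le> i \<Longrightarrow> x j \<le> x i" using mono calculation by blast
  ultimately show ?thesis by fastforce
qed

lemma U_mono_right: "(k, i) \<in> U \<Longrightarrow> i \<le> j \<Longrightarrow> j \<le> n \<Longrightarrow> (k, j) \<in> U"
  using U_iff mono[of i j] by fastforce

lemma U_mono_left: "(k', i) \<in> U \<Longrightarrow> 1 \<le> k \<Longrightarrow> k \<le> k' \<Longrightarrow> (k, i) \<in> U"
  using U_iff mono[of k k'] by fastforce

lemma finite_pred_levels: "finite {Suc (lev U i) | i. (i, j) \<in> U}"
proof -
  have "{i. (i, j) \<in> U} \<subseteq> {1..n}" using U_less by fastforce
  then have "finite {i. (i, j) \<in> U}" using finite_subset by blast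
  then show ?thesis by (rule finite_image_set)
qed

lemma lev_eq: "1 \<le> j \<Longrightarrow> lev U j = Max (insert 0 {Suc (lev U i) | i. (i, j) \<in> U})"
proof -
  assume "1 \<le> j"
  moreover have "i \<in> {1..j - 1}" if "(i, j) \<in> U" for i
    using U_less[OF that] by auto
  then have "{Suc (lev U i) | i. i \<in> {1..j - 1} \<and> (i, j) \<in> U} = {Suc (lev U i) | i. (i, j) \<in> U}"
    by blast
  ultimately show ?thesis using lev_eq_Max[of j U] by simp
qed

lemma lev_less: "(k, j) \<in> U \<Longrightarrow> lev U k < lev U j"
proof -
  assume kj: "(k, j) \<in> U"
  then have "Suc (lev U k) \<le> Max (insert 0 {Suc (lev U i) | i. (i, j) \<in> U})"
    using finite_pred_levels[of j] by (intro Max_ge) auto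
  then show ?thesis using lev_eq[of j] U_less[OF kj] by simp
qed

lemma lev_pred:
  assumes "1 \<le> j" "0 < lev U j"
  obtains k where "(k, j) \<in> U" "Suc (lev U k) = lev U j"
proof -
  let ?S = "insert 0 {Suc (lev U i) | i. (i, j) \<in> U}"
  have "Max ?S \<in> ?S" using finite_pred_levels by (intro Max_in) auto
  then show ?thesis using that assms lev_eq[OF assms(1)] by auto
qed

lemma lev_mono: "1 \<le> i \<Longrightarrow> i \<le> j \<Longrightarrow> j \<le> n \<Longrightarrow> lev U i \<le> lev U j"
proof -
  assume ij: "1 \<le> i" "i \<le> j" "j \<le> n"
  then have "insert 0 {Suc (lev U k) | k. (k, i) \<in> U} \<subseteq> insert 0 {Suc (lev U k) | k. (k, j) \<in> U}"
    using U_mono_right by blast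
  then have "Max (insert 0 {Suc (lev U k) | k. (k, i) \<in> U}) \<le> Max (insert 0 {Suc (lev U k) | k. (k, j) \<in> U})"
    using finite_pred_levels by (intro Max_mono) auto
  then show ?thesis using lev_eq[of i] lev_eq[of j] ij by simp
qed

text \<open>Otherwise the chain \<open>j\<^sub>1 \<prec> j\<^sub>2 \<prec> j\<close> of level predecessors would give
  \<open>x j\<^sub>1 + 1 < x k\<close>, i.e.\ \<open>j\<^sub>1 \<prec> k\<close>, although \<open>lev k \<le> lev j\<^sub>1\<close>.\<close>

lemma U_if_lev_ge:
  assumes k: "1 \<le> k" "k \<le> n" and j: "1 \<le> j" "j \<le> n" and "lev U k + 2 \<le> lev U j"
  shows "(k, j) \<in> U"
proof (rule ccontr)
  assume "(k, j) \<notin> U"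
  then have "x j \<le> x k + 1" using U_iff k j by auto
  have "0 < lev U j" using assms(5) by simp
  then obtain j2 where j2: "(j2, j) \<in> U" "Suc (lev U j2) = lev U j"
    using lev_pred[OF j(1)] by blast
  have "1 \<le> j2" "0 < lev U j2" using j2 U_less assms(5) by auto
  then obtain j1 where j1: "(j1, j2) \<in> U" "Suc (lev U j1) = lev U j2"
    using lev_pred by blast
  have "x j1 + 1 < x j2" "x j2 + 1 < x j" "1 \<le> j1" "j1 \<le> n"
    using j1(1) j2(1) U_iff by auto
  then have "(j1, k) \<in> U"
    using k \<open>x j \<le> x k + 1\<close> U_iff by auto
  then show False using lev_less[of j1 k] j1(2) j2(2) assms(5) by linarith
qed

end

section \<open>Canonical listings\<close>

lemma mem_Pw_iff:
  "(p, q) \<in> Pw w \<longleftrightarrow> p \<in> {1..length w} \<and> q \<in> {1..length w} \<and>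
     (w ! (p - 1) + 2 \<le> w ! (q - 1) \<or> (w ! (q - 1) = Suc (w ! (p - 1)) \<and> p < q))"
  unfolding Pw_def by auto

definition canonical_listing :: "nat \<Rightarrow> (nat \<times> nat) set \<Rightarrow> nat list \<Rightarrow> bool" where
  "canonical_listing m R e \<longleftrightarrow> distinct e \<and> set e = {1..m} \<and> area_seq m (map (lev R) e)
     \<and> (\<forall>u v. precedes e u v \<longrightarrow> lev R u = lev R v \<longrightarrow> u < v)
     \<and> (\<forall>u\<in>set e. \<forall>v\<in>set e. lev R v = Suc (lev R u) \<longrightarrow> ((u, v) \<in> R \<longleftrightarrow> precedes e u v))"

lemma canonical_listingI:
  assumes "distinct e" "set e = {1..m}" "e \<noteq> [] \<Longrightarrow> lev R (hd e) = 0"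
    "area_steps (map (lev R) e)"
    "\<And>u v. precedes e u v \<Longrightarrow> lev R u = lev R v \<Longrightarrow> u < v"
    "\<And>u v. u \<in> set e \<Longrightarrow> v \<in> set e \<Longrightarrow> lev R v = Suc (lev R u) \<Longrightarrow> (u, v) \<in> R \<longleftrightarrow> precedes e u v"
  shows "canonical_listing m R e"
proof -
  have "length e = m" using assms(1,2) distinct_card by fastforce
  then show ?thesis using assms unfolding canonical_listing_def area_seq_iff by (auto simp: hd_map)
qed

lemma canonical_listingD:
  assumes "canonical_listing m R e"
  shows "distinct e" "set e = {1..m}" "length e = m" "e \<noteq> [] \<Longrightarrow> lev R (hd e) = 0"
    "area_steps (map (lev R) e)"
    "precedes e u v \<Longrightarrow> lev R u = lev R v \<Longrightarrow> u < v"
    "u \<in> set e \<Longrightarrow> v \<in> set e \<Longrightarrow> lev R v = Suc (lev R u) \<Longrightarrow> (u, v) \<in> R \<longleftrightarrow> precedes e u v"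
  using assms unfolding canonical_listing_def area_seq_iff by (auto simp: hd_map)

lemma canonical_listing_0: "canonical_listing 0 R []"
  by (rule canonical_listingI) simp_all

lemma canonical_listing_1: "canonical_listing 1 R [1]"
  by (rule canonical_listingI) (simp_all add: lev_def)

lemma canonical_listing_1_eq: "canonical_listing 1 R e \<Longrightarrow> e = [1]"
proof -
  assume c: "canonical_listing 1 R e"
  then have "length e = 1" "set e = {1}" using canonical_listingD(2,3)[OF c] by simp_all
  then show "e = [1]" by (cases e) auto
qed

definition q_insert_pos :: "nat \<Rightarrow> (nat \<times> nat) set \<Rightarrow> nat \<Rightarrow> nat list \<Rightarrow> nat" where
  "q_insert_pos n R i q = (let l = lev R i in
     if l = 0 then run_end 0 l q else run_end (after_occ (l - 1) (C_count n R i) q) l q)"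

lemma q_step_Suc:
  fixes n :: nat and R :: "(nat \<times> nat) set"
  assumes "1 \<le> m"
  defines "q \<equiv> q_step n R m"
  shows "q_step n R (Suc m) = take (q_insert_pos n R (Suc m) q) q @ lev R (Suc m) # drop (q_insert_pos n R (Suc m) q) q"
proof -
  obtain k where "m = Suc k" using assms(1) by (cases m) auto
  then show ?thesis by (simp add: q_def q_insert_pos_def Let_def insert_after_run_eq)
qed

context unit_interval_order
begin

lemma U_iff_canonical:
  assumes c: "canonical_listing m U e" and "m \<le> n" "u \<in> set e" "v \<in> set e"
  shows "(u, v) \<in> U \<longleftrightarrow> lev U u + 2 \<le> lev U v \<or> (lev U v = Suc (lev U u) \<and> precedes e u v)"
proof -
  have uv: "1 \<le> u" "u \<le> n" "1 \<le> v" "v \<le> n" using assms canonical_listingD(2)[OF c] by auto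
  consider "lev U u + 2 \<le> lev U v" | "lev U v = Suc (lev U u)" | "lev U v \<le> lev U u"
    by linarith
  then show ?thesis
  proof cases
    case 1
    then show ?thesis using U_if_lev_ge uv by simp
  next
    case 2
    then show ?thesis using canonical_listingD(7)[OF c] assms(3,4) by simp
  next
    case 3
    then show ?thesis using lev_less[of u v] by auto
  qed
qed

theorem canonical_listing_iso:
  assumes c: "canonical_listing n U e"
  shows "poset_iso n (Pw (map (lev U) e)) U"
proof -
  note e = canonical_listingD(1-3)[OF c]
  let ?g = "\<lambda>p. e ! (p - 1)"
  have "bij_betw (\<lambda>p. p - 1) {1..n} {..<n}"
    by (rule bij_betw_byWitness[where f' = Suc]) auto
  moreover have "bij_betw ((!) e) {..<n} {1..n}"
    using bij_betw_nth[OF e(1)] e by simp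
  ultimately have g: "bij_betw ?g {1..n} {1..n}"
    using bij_betw_trans by (fastforce simp: comp_def)
  have "(p, q) \<in> Pw (map (lev U) e) \<longleftrightarrow> (?g p, ?g q) \<in> U" if "p \<in> {1..n}" "q \<in> {1..n}" for p q
  proof -
    have i: "p - 1 < length e" "q - 1 < length e" using that e(3) by auto
    have "precedes e (?g p) (?g q) \<longleftrightarrow> p - 1 < q - 1" using precedes_nth_iff[OF e(1) i] .
    also have "\<dots> \<longleftrightarrow> p < q" using that by auto
    finally have "precedes e (?g p) (?g q) \<longleftrightarrow> p < q" .
    moreover have "?g p \<in> set e" "?g q \<in> set e" using that e(3) by auto
    ultimately show ?thesis
      using U_iff_canonical[OF c order_refl] that e(3) by (auto simp: mem_Pw_iff)
  qed
  then show ?thesis unfolding poset_iso_def using g by blast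
qed

definition level_preds :: "nat \<Rightarrow> nat set" where
  "level_preds i = {k. (k, i) \<in> U \<and> Suc (lev U k) = lev U i}"

lemma level_preds_subset: "level_preds i \<subseteq> {1..<i}"
  unfolding level_preds_def by (auto dest: U_less)

lemma finite_level_preds: "finite (level_preds i)"
  using level_preds_subset finite_subset by blast

lemma level_preds_nonempty:
  assumes "1 \<le> i" "0 < lev U i"
  shows "level_preds i \<noteq> {}"
proof -
  obtain k where "(k, i) \<in> U" "Suc (lev U k) = lev U i" using lev_pred[OF assms] by blast
  then show ?thesis by (auto simp: level_preds_def)
qed

lemma C_count_eq_card: "C_count n U i = card (level_preds i)"
proof -
  have "{k \<in> {1..n}. (k, i) \<in> U \<and> int (lev U k) = int (lev U i) - 1} = level_preds i"
    unfolding level_preds_def by (auto dest: U_less)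
  then show ?thesis by (simp add: C_count_def)
qed

lemma q_insert_pos_eq:
  "lev U i = Suc a \<Longrightarrow> q_insert_pos n U i W = insertion_point a (card (level_preds i)) W"
  by (simp add: q_insert_pos_def insertion_point_def C_count_eq_card)

lemma q_insert_pos_eq_length:
  assumes "lev U i = 0" "\<forall>v\<in>set W. v = 0"
  shows "q_insert_pos n U i W = length W"
proof -
  have "takeWhile (\<lambda>x. x = 0) W = W" using assms(2) by (simp add: takeWhile_eq_all_conv)
  then have "length (takeWhile (\<lambda>x. x = 0) W) = length W" by (rule arg_cong)
  then show ?thesis
    using assms(1) by (simp add: q_insert_pos_def run_end_def del: takeWhile_eq_all_conv)
qed

lemma lev_le_next:
  "canonical_listing m U e \<Longrightarrow> Suc m \<le> n \<Longrightarrow> y \<in> set e \<Longrightarrow> lev U y \<le> lev U (Suc m)"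
  using lev_mono canonical_listingD(2) by simp

definition admissible_split :: "nat \<Rightarrow> nat list \<Rightarrow> nat list \<Rightarrow> bool" where
  "admissible_split i xs ys \<longleftrightarrow> {y \<in> set xs. Suc (lev U y) = lev U i} = level_preds i
     \<and> (\<forall>y\<in>set ys. lev U y < lev U i)
     \<and> (if xs = [] then lev U i = 0 else lev U i \<le> Suc (lev U (last xs)))"

lemma admissible_splitD:
  assumes "admissible_split i xs ys"
  shows "{y \<in> set xs. Suc (lev U y) = lev U i} = level_preds i" "\<forall>y\<in>set ys. lev U y < lev U i"
    "xs = [] \<Longrightarrow> lev U i = 0" "xs \<noteq> [] \<Longrightarrow> lev U i \<le> Suc (lev U (last xs))"
  using assms by (simp_all add: admissible_split_def split: if_splits)

lemma canonical_listing_split_admissible: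
  assumes c: "canonical_listing (Suc m) U (xs @ Suc m # ys)" and "Suc m \<le> n"
  shows "admissible_split (Suc m) xs ys"
proof -
  let ?i = "Suc m"
  note e = canonical_listingD[OF c]
  have ys: "lev U y < lev U ?i" if "y \<in> set ys" for y
  proof -
    have "y \<in> set (xs @ ?i # ys)" "y \<noteq> ?i" using that e(1) by auto
    then have "lev U y \<le> lev U ?i" "y < ?i" using lev_mono[of y ?i] e(2) assms(2) by auto
    moreover have "precedes (xs @ ?i # ys) ?i y" using that by (simp add: precedes_insert)
    ultimately show ?thesis using e(6)[of ?i y] by fastforce
  qed
  have "y \<in> set xs \<longleftrightarrow> y \<in> level_preds ?i" if "Suc (lev U y) = lev U ?i" for y
  proof -
    have "y \<in> level_preds ?i \<Longrightarrow> y \<in> set (xs @ ?i # ys)"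
      using level_preds_subset e(2) by fastforce
    then show ?thesis
      using that e(7)[of y ?i] precedes_inserted_iff[OF e(1)] by (auto simp: level_preds_def)
  qed
  then have preds: "{y \<in> set xs. Suc (lev U y) = lev U ?i} = level_preds ?i"
    by (auto simp: level_preds_def)
  have "lev U ?i \<le> Suc (lev U (last xs))" if "xs \<noteq> []"
    using e(5) that by (simp add: successively_append_iff last_map)
  moreover have "lev U ?i = 0" if "xs = []" using e(4) that by simp
  ultimately show ?thesis using ys preds by (simp add: admissible_split_def)
qed

lemma canonical_listing_delete:
  assumes c: "canonical_listing (Suc m) U (xs @ Suc m # ys)" and "Suc m \<le> n"
  shows "canonical_listing m U (xs @ ys)"
proof -
  let ?i = "Suc m"
  note e = canonical_listingD[OF c]
  note adm = admissible_splitD(2-4)[OF canonical_listing_split_admissible[OF assms]]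
  have f: "xs @ ys = filter (\<lambda>x. x \<le> m) (xs @ ?i # ys)"
    using filter_le_insert[OF e(1,2)] by simp
  show ?thesis
  proof (rule canonical_listingI)
    show "distinct (xs @ ys)" using e(1) by simp
    have "set (xs @ ys) = set (xs @ ?i # ys) - {?i}" using e(1) by auto
    also have "\<dots> = {1..m}" unfolding e(2) by auto
    finally show "set (xs @ ys) = {1..m}" .
    show "lev U (hd (xs @ ys)) = 0" if "xs @ ys \<noteq> []"
    proof (cases xs)
      case Nil
      then show ?thesis using that adm(1,2) by (cases ys) auto
    qed (use e(4) in simp)
    have junction: "hd (map (lev U) ys) \<le> Suc (last (map (lev U) xs))" if "xs \<noteq> []" "ys \<noteq> []"
      using adm(1) adm(3)[OF that(1)] hd_in_set[OF that(2)] that by (fastforce simp: hd_map last_map)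
    have "area_steps (map (lev U) xs)" "area_steps (lev U ?i # map (lev U) ys)"
      using e(5) by (simp_all add: successively_append_iff)
    moreover have "area_steps (map (lev U) ys)" using calculation(2) by (cases ys) simp_all
    ultimately show "area_steps (map (lev U) (xs @ ys))"
      unfolding map_append successively_append_iff using junction by auto
    show "u < v" if "precedes (xs @ ys) u v" "lev U u = lev U v" for u v
      using that e(6) unfolding f precedes_filter by blast
    show "(u, v) \<in> U \<longleftrightarrow> precedes (xs @ ys) u v"
      if "u \<in> set (xs @ ys)" "v \<in> set (xs @ ys)" "lev U v = Suc (lev U u)" for u v
      using that e(7)[of u v] unfolding f precedes_filter by auto
  qed
qed

lemma U_iff_precedes_insert:
  assumes c: "canonical_listing m U (xs @ ys)" and "Suc m \<le> n"
    and adm: "admissible_split (Suc m) xs ys"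
    and u: "u \<in> set (xs @ Suc m # ys)" and v: "v \<in> set (xs @ Suc m # ys)"
    and uv: "lev U v = Suc (lev U u)"
  shows "(u, v) \<in> U \<longleftrightarrow> precedes (xs @ Suc m # ys) u v"
proof (cases "v = Suc m")
  case True
  have "Suc m \<notin> set (xs @ ys)" using canonical_listingD(2)[OF c] by simp
  then have d: "distinct (xs @ Suc m # ys)" using canonical_listingD(1)[OF c] by auto
  have "(u, v) \<in> U \<longleftrightarrow> u \<in> level_preds (Suc m)" using uv True by (simp add: level_preds_def)
  also have "\<dots> \<longleftrightarrow> u \<in> set xs"
    using uv True by (simp add: admissible_splitD(1)[OF adm, symmetric])
  also have "\<dots> \<longleftrightarrow> precedes (xs @ Suc m # ys) u v" using precedes_inserted_iff[OF d] True by simp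
  finally show ?thesis .
next
  case False
  then have v': "v \<in> set (xs @ ys)" using v by simp
  have "u \<noteq> Suc m"
  proof
    assume "u = Suc m"
    then show False using lev_le_next[OF c assms(2) v'] uv by simp
  qed
  then have "u \<in> set (xs @ ys)" using u by simp
  moreover have "precedes (xs @ Suc m # ys) u v \<longleftrightarrow> precedes (xs @ ys) u v"
    using \<open>u \<noteq> Suc m\<close> False by (simp add: precedes_insert)
  ultimately show ?thesis using canonical_listingD(7)[OF c _ v' uv] by simp
qed

lemma canonical_listing_insert:
  assumes c: "canonical_listing m U (xs @ ys)" and "Suc m \<le> n"
    and "admissible_split (Suc m) xs ys"
  shows "canonical_listing (Suc m) U (xs @ Suc m # ys)"
proof -
  let ?i = "Suc m" and ?l = "lev U (Suc m)"
  note e = canonical_listingD[OF c]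
  note adm = admissible_splitD[OF assms(3)]
  have le: "lev U y \<le> ?l" if "y \<in> set (xs @ ys)" for y
    using lev_le_next[OF c assms(2) that] .
  have "?i \<notin> set (xs @ ys)" using e(2) by simp
  then have d: "distinct (xs @ ?i # ys)" using e(1) by auto
  show ?thesis
  proof (rule canonical_listingI)
    show "distinct (xs @ ?i # ys)" by (rule d)
    show "set (xs @ ?i # ys) = {1..?i}" using e(2) by (simp add: atLeastAtMostSuc_conv)
    show "lev U (hd (xs @ ?i # ys)) = 0" using e(4) adm(3) by (cases xs) simp_all
    have "area_steps (map (lev U) xs)" "area_steps (map (lev U) ys)"
      using e(5) by (simp_all add: successively_append_iff)
    moreover have "xs \<noteq> [] \<Longrightarrow> ?l \<le> Suc (last (map (lev U) xs))"
      using adm(4) by (simp add: last_map)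
    moreover have "ys \<noteq> [] \<Longrightarrow> hd (map (lev U) ys) \<le> Suc ?l"
      using le[of "hd ys"] by (simp add: hd_map)
    ultimately show "area_steps (map (lev U) (xs @ ?i # ys))"
      unfolding map_append list.map(2) successively_append_iff successively_Cons by (simp; blast)
    show "u < v" if p: "precedes (xs @ ?i # ys) u v" and eq: "lev U u = lev U v" for u v
    proof -
      consider "precedes (xs @ ys) u v" | "u \<in> set xs" "v = ?i" | "u = ?i" "v \<in> set ys"
        using p unfolding precedes_insert by blast
      then show ?thesis
      proof cases
        case 1
        then show ?thesis using e(6) eq by blast
      next
        case 2
        then have "u \<in> {1..m}" using e(2) by auto
        then show ?thesis using 2 by simp
      next
        case 3
        then have "lev U v < lev U u" using adm(2) by blast
        then show ?thesis using eq by simp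
      qed
    qed
    show "(u, v) \<in> U \<longleftrightarrow> precedes (xs @ ?i # ys) u v"
      if "u \<in> set (xs @ ?i # ys)" "v \<in> set (xs @ ?i # ys)" "lev U v = Suc (lev U u)" for u v
      using U_iff_precedes_insert[OF assms that] .
  qed
qed

lemma admissible_split_length:
  assumes c: "canonical_listing m U (xs @ ys)" and "Suc m \<le> n"
    and adm: "admissible_split (Suc m) xs ys"
  shows "length xs = q_insert_pos n U (Suc m) (map (lev U) (xs @ ys))"
proof -
  let ?l = "lev U (Suc m)" and ?W = "map (lev U) (xs @ ys)"
  note e = canonical_listingD[OF c]
  note adm = admissible_splitD[OF adm]
  have le: "\<forall>v\<in>set ?W. v \<le> ?l" using lev_le_next[OF c assms(2)] by auto
  show ?thesis
  proof (cases ?l)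
    case 0
    then have "ys = []" using adm(2) by (cases ys) auto
    then show ?thesis using q_insert_pos_eq_length[OF 0] le 0 by simp
  next
    case (Suc a)
    have xs: "xs \<noteq> []" using adm(3) Suc by auto
    have "{y \<in> set xs. lev U y = a} = level_preds (Suc m)" using adm(1) Suc by simp
    moreover have "distinct xs" using e(1) by simp
    ultimately have C: "count_list (take (length xs) ?W) a = card (level_preds (Suc m))"
      using count_list_map_distinct[of xs "lev U" a] by simp
    have "card (level_preds (Suc m)) \<noteq> 0"
      using level_preds_nonempty[of "Suc m"] finite_level_preds Suc by simp
    moreover have "run_boundary a ?W (length xs)"
    proof -
      have "?W ! (length xs - 1) = lev U (last xs)"
        using xs by (simp add: nth_append last_conv_nth)
      moreover have "lev U (last xs) \<le> ?l" using le xs by simp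
      moreover have "?W ! length xs \<noteq> Suc a" if "length xs < length ?W"
      proof -
        have "ys \<noteq> []" using that by simp
        then have "?W ! length xs = lev U (hd ys)" by (simp add: nth_append hd_conv_nth)
        then show ?thesis using adm(2) Suc hd_in_set[OF \<open>ys \<noteq> []\<close>] by fastforce
      qed
      ultimately show ?thesis using adm(4)[OF xs] Suc xs by (auto simp: run_boundary_def Suc_le_eq)
    qed
    ultimately have "length xs = insertion_point a (card (level_preds (Suc m))) ?W"
      using run_boundary_eq_insertion_point[OF e(5) _ _ C[symmetric]] le Suc by simp
    then show ?thesis using q_insert_pos_eq[OF Suc] by simp
  qed
qed

text \<open>Among the elements of level \<open>a\<close>, both sides are initial segments for the order of labels:
  the left one because equal levels are listed in increasing order, the right one by
  \<open>U_mono_left\<close>.\<close>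

lemma level_preds_eq_if_card:
  assumes c: "canonical_listing m U (xs @ ys)" and l: "lev U (Suc m) = Suc a"
    and card: "card {y \<in> set xs. lev U y = a} = card (level_preds (Suc m))"
  shows "{y \<in> set xs. lev U y = a} = level_preds (Suc m)"
proof (rule down_closed_eqI[of "{y \<in> set (xs @ ys). lev U y = a}"])
  note e = canonical_listingD[OF c]
  show "finite {y \<in> set (xs @ ys). lev U y = a}" by simp
  show "{y \<in> set xs. lev U y = a} \<subseteq> {y \<in> set (xs @ ys). lev U y = a}" by auto
  show "level_preds (Suc m) \<subseteq> {y \<in> set (xs @ ys). lev U y = a}"
  proof
    fix y assume y: "y \<in> level_preds (Suc m)"
    then have "y \<in> {1..<Suc m}" using level_preds_subset by blast
    then show "y \<in> {y \<in> set (xs @ ys). lev U y = a}" using y e(2) l by (auto simp: level_preds_def)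
  qed
  show "y \<in> {y \<in> set xs. lev U y = a}"
    if y: "y \<in> {y \<in> set (xs @ ys). lev U y = a}" and z: "z \<in> {y \<in> set xs. lev U y = a}"
      and "y < z" for y z
  proof -
    have "\<not> precedes (xs @ ys) z y" using e(6)[of z y] that by auto
    then have "precedes (xs @ ys) y z" using precedes_total[of y "xs @ ys" z] that by auto
    then show ?thesis using precedes_append_left[OF e(1)] y z by auto
  qed
  show "y \<in> level_preds (Suc m)"
    if "y \<in> {y \<in> set (xs @ ys). lev U y = a}" and "z \<in> level_preds (Suc m)" and "y < z" for y z
  proof -
    have "y \<in> {1..m}" using that(1) e(2) by blast
    then show ?thesis using U_mono_left[of z "Suc m" y] that l by (auto simp: level_preds_def)
  qed
qed (use card in simp)

text \<open>An element of level \<open>a\<close> in \<open>ys\<close> listed before an element \<open>j\<close> of level \<open>Suc a\<close> would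
  precede \<open>j\<close> and hence \<open>Suc m\<close> in \<open>U\<close>, although it is not in \<open>xs\<close>.\<close>

lemma levels_after_split_less:
  assumes c: "canonical_listing m U (xs @ ys)" and "Suc m \<le> n" and l: "lev U (Suc m) = Suc a"
    and preds: "{y \<in> set xs. lev U y = a} = level_preds (Suc m)"
    and hd: "ys \<noteq> [] \<Longrightarrow> lev U (hd ys) \<le> a"
  shows "\<forall>y\<in>set ys. lev U y < Suc a"
proof (rule ccontr)
  note e = canonical_listingD[OF c]
  assume "\<not> (\<forall>y\<in>set ys. lev U y < Suc a)"
  then obtain t where t: "t < length ys" "lev U (ys ! t) = Suc a"
    using lev_le_next[OF c assms(2)] l by (fastforce simp: in_set_conv_nth)
  have "area_steps (map (lev U) ys)" using e(5) by (simp add: successively_append_iff)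
  moreover have "0 < length ys" using t(1) by linarith
  then have "map (lev U) ys ! 0 \<le> a" using hd by (simp add: hd_conv_nth)
  ultimately obtain s where s: "s < t" "lev U (ys ! s) = a"
    using area_steps_intermediate_value[of "map (lev U) ys" t a] t by auto
  have "distinct ys" using e(1) by simp
  then have "precedes ys (ys ! s) (ys ! t)" using precedes_nth_iff[of ys s t] s t by simp
  then have "precedes (xs @ ys) (ys ! s) (ys ! t)" by (simp add: precedes_append)
  then have "(ys ! s, ys ! t) \<in> U" using e(7) s t by simp
  moreover have "ys ! t \<in> set (xs @ ys)" using t(1) by simp
  then have "ys ! t \<le> Suc m" unfolding e(2) by simp
  ultimately have "(ys ! s, Suc m) \<in> U" using U_mono_right assms(2) by blast
  then have "ys ! s \<in> set xs" using preds s l by (auto simp: level_preds_def)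
  then show False using e(1) s t by auto
qed

lemma admissible_split_at_run_boundary:
  assumes c: "canonical_listing m U E" and "Suc m \<le> n" and l: "lev U (Suc m) = Suc a"
    and p: "run_boundary a (map (lev U) E) p"
      "count_list (take p (map (lev U) E)) a = card (level_preds (Suc m))"
  shows "admissible_split (Suc m) (take p E) (drop p E)"
proof -
  let ?W = "map (lev U) E" and ?xs = "take p E" and ?ys = "drop p E"
  note e = canonical_listingD[OF c]
  have c': "canonical_listing m U (?xs @ ?ys)" using c by simp
  have "distinct ?xs" using e(1) by simp
  then have "card {y \<in> set ?xs. lev U y = a} = card (level_preds (Suc m))"
    using p(2) count_list_map_distinct[of ?xs "lev U" a] by (simp add: take_map)
  then have preds: "{y \<in> set ?xs. lev U y = a} = level_preds (Suc m)"
    using level_preds_eq_if_card[OF c' l] by simp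
  have "lev U (hd ?ys) \<le> a" if "?ys \<noteq> []"
  proof -
    have "p < length E" using that by simp
    then have "hd ?ys = E ! p" by (simp add: hd_drop_conv_nth)
    moreover have "?W ! p \<noteq> Suc a" using p(1) \<open>p < length E\<close> by (auto simp: run_boundary_def)
    ultimately show ?thesis using lev_le_next[OF c assms(2), of "E ! p"] l \<open>p < length E\<close> by simp
  qed
  then have "\<forall>y\<in>set ?ys. lev U y < Suc a" using levels_after_split_less[OF c' assms(2) l preds] by simp
  moreover have "?xs \<noteq> []" "lev U (Suc m) \<le> Suc (lev U (last ?xs))"
  proof -
    have p1: "1 \<le> p" "p \<le> length E" "?W ! (p - 1) \<in> {a, Suc a}"
      using p(1) by (simp_all add: run_boundary_def)
    then show "?xs \<noteq> []" by auto
    then have "last ?xs = ?xs ! (length ?xs - 1)" by (rule last_conv_nth)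
    also have "\<dots> = E ! (p - 1)" using p1 by (simp add: min_absorb1)
    finally show "lev U (Suc m) \<le> Suc (lev U (last ?xs))" using p1 l by auto
  qed
  ultimately show ?thesis using preds l by (simp add: admissible_split_def)
qed

lemma admissible_split_q_insert_pos:
  assumes c: "canonical_listing m U E" and "Suc m \<le> n"
  defines "p \<equiv> q_insert_pos n U (Suc m) (map (lev U) E)"
  shows "admissible_split (Suc m) (take p E) (drop p E)"
proof (cases "lev U (Suc m)")
  case 0
  moreover have "\<forall>v\<in>set (map (lev U) E). v = 0" using lev_le_next[OF c assms(2)] 0 by auto
  ultimately have "p = length E" using q_insert_pos_eq_length by (simp add: p_def)
  moreover have "level_preds (Suc m) = {}" using 0 by (simp add: level_preds_def)
  ultimately show ?thesis using 0 by (simp add: admissible_split_def)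
next
  case (Suc a)
  let ?C = "card (level_preds (Suc m))" and ?W = "map (lev U) E"
  have "?C \<noteq> 0" using level_preds_nonempty finite_level_preds Suc by simp
  moreover have "level_preds (Suc m) \<subseteq> {y \<in> set E. lev U y = a}"
    using level_preds_subset canonical_listingD(2)[OF c] Suc by (fastforce simp: level_preds_def)
  then have "?C \<le> count_list ?W a"
    unfolding count_list_map_distinct[OF canonical_listingD(1)[OF c]] by (simp add: card_mono)
  ultimately have "run_boundary a ?W p" "count_list (take p ?W) a = ?C"
    using insertion_point_spec[of ?C ?W a] q_insert_pos_eq[OF Suc] by (simp_all add: p_def)
  then show ?thesis by (rule admissible_split_at_run_boundary[OF c assms(2) Suc])
qed

lemma canonical_listing_remove:
  assumes c: "canonical_listing (Suc m) U e" and "Suc m \<le> n"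
  obtains xs ys where "e = xs @ Suc m # ys" "xs @ ys = filter (\<lambda>x. x \<le> m) e"
    "canonical_listing m U (xs @ ys)" "admissible_split (Suc m) xs ys"
proof -
  have "Suc m \<in> set e" using canonical_listingD(2)[OF c] by simp
  then obtain xs ys where e: "e = xs @ Suc m # ys" by (meson split_list)
  show ?thesis
  proof (rule that[OF e])
    show "xs @ ys = filter (\<lambda>x. x \<le> m) e"
      using filter_le_insert canonical_listingD(1,2)[OF c] e by simp
    show "canonical_listing m U (xs @ ys)"
      using c unfolding e by (rule canonical_listing_delete[OF _ assms(2)])
    show "admissible_split (Suc m) xs ys"
      using c unfolding e by (rule canonical_listing_split_admissible[OF _ assms(2)])
  qed
qed

lemma canonical_listing_filter:
  assumes c: "canonical_listing n U e" and "m \<le> n"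
  shows "canonical_listing m U (filter (\<lambda>x. x \<le> m) e)"
  using assms(2)
proof (induction "n - m" arbitrary: m)
  case 0
  then have "filter (\<lambda>x. x \<le> m) e = e" using canonical_listingD(2)[OF c] by simp
  then show ?case using c 0 by simp
next
  case (Suc d)
  then have m: "Suc m \<le> n" "d = n - Suc m" by auto
  then have c': "canonical_listing (Suc m) U (filter (\<lambda>x. x \<le> Suc m) e)"
    using Suc.hyps(1) by blast
  obtain xs ys where xs: "xs @ ys = filter (\<lambda>x. x \<le> m) (filter (\<lambda>x. x \<le> Suc m) e)"
    and c'': "canonical_listing m U (xs @ ys)"
    by (rule canonical_listing_remove[OF c' m(1)])
  show ?case using c'' unfolding xs filter_le_filter_le_Suc .
qed

lemma canonical_listing_filter_level_word:
  assumes c: "canonical_listing n U e"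
  shows "m \<le> n \<Longrightarrow> map (lev U) (filter (\<lambda>x. x \<le> m) e) = q_step n U m"
proof (induction m)
  case 0
  have "set (filter (\<lambda>x. x \<le> 0) e) = {}"
    using canonical_listingD(2)[OF canonical_listing_filter[OF c le0]] by simp
  then have "filter (\<lambda>x. x \<le> 0) e = []" by (simp only: set_empty)
  then show ?case by simp
next
  case (Suc m)
  note c' = canonical_listing_filter[OF c Suc.prems]
  show ?case
  proof (cases m)
    case 0
    then have "filter (\<lambda>x. x \<le> Suc m) e = [1]" using canonical_listing_1_eq c' by simp
    then show ?thesis using 0 lev_1[of U] by simp
  next
    case (Suc k)
    then have m1: "1 \<le> m" by simp
    obtain xs ys where xs: "filter (\<lambda>x. x \<le> Suc m) e = xs @ Suc m # ys"
      "xs @ ys = filter (\<lambda>x. x \<le> m) (filter (\<lambda>x. x \<le> Suc m) e)"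
      "canonical_listing m U (xs @ ys)" "admissible_split (Suc m) xs ys"
      by (rule canonical_listing_remove[OF c' Suc.prems])
    define W where "W = map (lev U) (xs @ ys)"
    have W: "q_step n U m = W"
      using Suc.IH Suc.prems xs(2) unfolding W_def filter_le_filter_le_Suc by simp
    have p: "q_insert_pos n U (Suc m) W = length xs"
      using admissible_split_length[OF xs(3) Suc.prems xs(4)] unfolding W_def ..
    have "map (lev U) (filter (\<lambda>x. x \<le> Suc m) e) =
        take (length xs) W @ lev U (Suc m) # drop (length xs) W"
      unfolding xs(1) W_def by simp
    then show ?thesis unfolding q_step_Suc[of m n U, OF m1] W p .
  qed
qed

theorem canonical_listing_level_word:
  assumes c: "canonical_listing n U e"
  shows "map (lev U) e = qU n U"
proof -
  have "filter (\<lambda>x. x \<le> n) e = e" using canonical_listingD(2)[OF c] by simp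
  then show ?thesis
    using canonical_listing_filter_level_word[OF c order_refl] by (simp add: qU_def)
qed

theorem canonical_listing_exists:
  "m \<le> n \<Longrightarrow> \<exists>e. canonical_listing m U e \<and> map (lev U) e = q_step n U m"
proof (induction m)
  case 0
  then show ?case using canonical_listing_0 by fastforce
next
  case (Suc m)
  show ?case
  proof (cases m)
    case 0
    then show ?thesis using canonical_listing_1 by (fastforce simp: lev_def)
  next
    case (Suc k)
    then have m1: "1 \<le> m" by simp
    obtain E where E: "canonical_listing m U E" "map (lev U) E = q_step n U m"
      using Suc.IH \<open>Suc m \<le> n\<close> by auto
    define p where "p = q_insert_pos n U (Suc m) (map (lev U) E)"
    have "canonical_listing (Suc m) U (take p E @ Suc m # drop p E)"
      using canonical_listing_insert[of m "take p E" "drop p E"] E(1) Suc.prems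
        admissible_split_q_insert_pos[OF E(1) Suc.prems] by (simp add: p_def)
    moreover have "map (lev U) (take p E @ Suc m # drop p E) = q_step n U (Suc m)"
      unfolding q_step_Suc[of m n U, OF m1] by (simp add: p_def take_map drop_map E(2)[symmetric])
    ultimately show ?thesis by blast
  qed
qed

end

section \<open>Isomorphic unit interval orders are equal\<close>

definition up_set :: "nat \<Rightarrow> (nat \<times> nat) set \<Rightarrow> nat \<Rightarrow> nat set" where
  "up_set n R i = {j \<in> {1..n}. (i, j) \<in> R}"

lemma card_up_set_iso:
  assumes f: "bij_betw f {1..n} {1..n}"
    and fR: "\<And>i j. i \<in> {1..n} \<Longrightarrow> j \<in> {1..n} \<Longrightarrow> (i, j) \<in> R \<longleftrightarrow> (f i, f j) \<in> S"
    and i: "i \<in> {1..n}"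
  shows "card (up_set n S (f i)) = card (up_set n R i)"
proof -
  have "up_set n S (f i) = f ` up_set n R i"
  proof
    show "up_set n S (f i) \<subseteq> f ` up_set n R i"
    proof
      fix j' assume j': "j' \<in> up_set n S (f i)"
      then have "j' \<in> f ` {1..n}" using bij_betw_imp_surj_on[OF f] by (simp add: up_set_def)
      then obtain j where j: "j \<in> {1..n}" "j' = f j" by blast
      then show "j' \<in> f ` up_set n R i" using fR[OF i j(1)] j' by (auto simp: up_set_def)
    qed
    show "f ` up_set n R i \<subseteq> up_set n S (f i)"
      using fR[OF i] bij_betwE[OF f] by (auto simp: up_set_def)
  qed
  moreover have "inj_on f (up_set n R i)"
    using bij_betw_imp_inj_on[OF f] by (rule inj_on_subset) (auto simp: up_set_def)
  ultimately show ?thesis by (simp add: card_image)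
qed

context unit_interval_order
begin

text \<open>The up-set of \<open>i\<close> is a final segment of \<open>{1..n}\<close>, so its size determines it.\<close>

lemma U_iff_card_up_set:
  assumes i: "i \<in> {1..n}" and j: "j \<in> {1..n}"
  shows "(i, j) \<in> U \<longleftrightarrow> n < j + card (up_set n U i)"
proof (cases "up_set n U i = {}")
  case True
  then have "(i, j) \<notin> U" using j by (auto simp: up_set_def)
  then show ?thesis using True j by simp
next
  case False
  have fin: "finite (up_set n U i)" by (simp add: up_set_def)
  define k where "k = Min (up_set n U i)"
  have k: "k \<in> up_set n U i" using Min_in[OF fin False] by (simp add: k_def)
  have "up_set n U i = {k..n}"
  proof
    show "up_set n U i \<subseteq> {k..n}" using Min_le[OF fin] by (auto simp: up_set_def k_def)
    show "{k..n} \<subseteq> up_set n U i"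
      using k U_mono_right[of i k] by (auto simp: up_set_def)
  qed
  moreover have "(i, j) \<in> U \<longleftrightarrow> j \<in> up_set n U i" using j by (simp add: up_set_def)
  moreover have "1 \<le> k" "k \<le> n" using k by (auto simp: up_set_def)
  ultimately show ?thesis using j by auto
qed

lemma antimono_card_up_set: "antimono_on {1..n} (\<lambda>i. card (up_set n U i))"
proof (rule monotone_onI)
  fix i i' assume "i \<in> {1..n}" "i' \<in> {1..n}" "i \<le> i'"
  then have "up_set n U i' \<subseteq> up_set n U i"
    using U_mono_left[of i' _ i] by (auto simp: up_set_def)
  then show "card (up_set n U i') \<le> card (up_set n U i)" by (intro card_mono) (auto simp: up_set_def)
qed

end

theorem unit_interval_order_iso_eq:
  assumes R: "unit_interval_order n R x" and S: "unit_interval_order n S y"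
    and iso: "poset_iso n R S"
  shows "R = S"
proof -
  interpret R: unit_interval_order n R x by (fact R)
  interpret S: unit_interval_order n S y by (fact S)
  obtain f where f: "bij_betw f {1..n} {1..n}"
    and fR: "\<And>i j. i \<in> {1..n} \<Longrightarrow> j \<in> {1..n} \<Longrightarrow> (i, j) \<in> R \<longleftrightarrow> (f i, f j) \<in> S"
    using iso unfolding poset_iso_def by blast
  have up: "card (up_set n R i) = card (up_set n S i)" if "i \<in> {1..n}" for i
    using antimono_on_eq_if_bij_betw[OF _ R.antimono_card_up_set S.antimono_card_up_set f]
      card_up_set_iso[OF f fR] that by simp
  show "R = S"
  proof (intro set_eqI, unfold split_paired_all)
    fix i j
    show "(i, j) \<in> R \<longleftrightarrow> (i, j) \<in> S"
    proof (cases "i \<in> {1..n} \<and> j \<in> {1..n}")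
      case True
      then show ?thesis using R.U_iff_card_up_set S.U_iff_card_up_set up by simp
    next
      case False
      then show ?thesis using R.U_less S.U_less by fastforce
    qed
  qed
qed

section \<open>Realizing an area sequence\<close>

lemma mem_Pw_iff_key:
  assumes "length w = n" "p \<in> {1..n}" "q \<in> {1..n}"
  shows "(p, q) \<in> Pw w \<longleftrightarrow> w ! (p - 1) * (n + 1) + p + (n + 1) < w ! (q - 1) * (n + 1) + q"
proof -
  let ?a = "w ! (p - 1)" and ?b = "w ! (q - 1)" and ?N = "n + 1"
  consider "?a + 2 \<le> ?b" | "?b = Suc ?a" | "?b \<le> ?a" by linarith
  then show ?thesis
  proof cases
    case 1
    then have "(?a + 2) * ?N \<le> ?b * ?N" by (rule mult_le_mono1)
    then show ?thesis using 1 assms by (auto simp: mem_Pw_iff algebra_simps)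
  next
    case 2
    then show ?thesis using assms by (auto simp: mem_Pw_iff algebra_simps)
  next
    case 3
    then have "?b * ?N \<le> ?a * ?N" by (rule mult_le_mono1)
    then show ?thesis using 3 assms by (auto simp: mem_Pw_iff)
  qed
qed

lemma inj_on_mult_Suc_add:
  fixes f :: "nat \<Rightarrow> nat"
  shows "inj_on (\<lambda>p. f p * (n + 1) + p) {1..n}"
proof (rule inj_onI)
  fix p q assume "p \<in> {1..n}" "q \<in> {1..n}" and eq: "f p * (n + 1) + p = f q * (n + 1) + q"
  have "p = (f p * (n + 1) + p) mod (n + 1)"
    using \<open>p \<in> {1..n}\<close> by (simp only: mod_mult_self3) simp
  also have "\<dots> = q"
    unfolding eq using \<open>q \<in> {1..n}\<close> by (simp only: mod_mult_self3) simp
  finally show "p = q" .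
qed

lemma divide_add_one_less_iff:
  fixes a b N :: real
  assumes "N > 0"
  shows "a / N + 1 < b / N \<longleftrightarrow> a + N < b"
proof -
  have "a / N + 1 = (a + N) / N" using assms by (simp add: field_simps)
  then show ?thesis using assms by (simp add: divide_less_cancel)
qed

lemma Pw_unit_interval_representation:
  assumes "length w = n"
  obtains lab :: "nat \<Rightarrow> nat" and y :: "nat \<Rightarrow> real" where
    "bij_betw lab {1..n} {1..n}"
    "\<And>p q. p \<in> {1..n} \<Longrightarrow> q \<in> {1..n} \<Longrightarrow> w ! (p - 1) = w ! (q - 1) \<Longrightarrow> p < q \<Longrightarrow> lab p < lab q"
    "\<And>i j. 1 \<le> i \<Longrightarrow> i \<le> j \<Longrightarrow> j \<le> n \<Longrightarrow> y i \<le> y j"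
    "\<And>p q. p \<in> {1..n} \<Longrightarrow> q \<in> {1..n} \<Longrightarrow> (p, q) \<in> Pw w \<longleftrightarrow> y (lab p) + 1 < y (lab q)"
proof -
  define key where "key p = w ! (p - 1) * (n + 1) + p" for p
  have "inj_on key {1..n}"
    unfolding key_def[abs_def] by (rule inj_on_mult_Suc_add)
  define lab where "lab = (\<lambda>p. Suc (card {r \<in> {1..n}. key r < key p}))"
  have lab: "bij_betw lab {1..n} {1..n}"
    using rank_bij_betw[OF _ \<open>inj_on key {1..n}\<close>] by (simp add: lab_def)
  have lab_less: "lab p < lab q \<longleftrightarrow> key p < key q" if "p \<in> {1..n}" "q \<in> {1..n}" for p q
    using rank_less_iff[OF _ \<open>inj_on key {1..n}\<close> that] by (simp add: lab_def)
  define y where "y i = real (key (inv_into {1..n} lab i)) / real (n + 1)" for i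
  have y_lab: "y (lab p) = real (key p) / real (n + 1)" if "p \<in> {1..n}" for p
    using bij_betw_inv_into_left[OF lab that] by (simp add: y_def)
  show ?thesis
  proof
    show "bij_betw lab {1..n} {1..n}" by (rule lab)
    show "lab p < lab q" if "p \<in> {1..n}" "q \<in> {1..n}" "w ! (p - 1) = w ! (q - 1)" "p < q" for p q
      using that lab_less by (simp add: key_def)
    show "y i \<le> y j" if "1 \<le> i" "i \<le> j" "j \<le> n" for i j
    proof -
      have "i \<in> lab ` {1..n}" "j \<in> lab ` {1..n}" using that bij_betw_imp_surj_on[OF lab] by auto
      then obtain p q where pq: "p \<in> {1..n}" "q \<in> {1..n}" "i = lab p" "j = lab q" by blast
      then have "\<not> key q < key p" using lab_less[of q p] that(2) by simp
      then have "real (key p) / real (n + 1) \<le> real (key q) / real (n + 1)"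
        by (simp add: divide_right_mono)
      then show ?thesis using pq y_lab by simp
    qed
    show "(p, q) \<in> Pw w \<longleftrightarrow> y (lab p) + 1 < y (lab q)" if "p \<in> {1..n}" "q \<in> {1..n}" for p q
    proof -
      have "(p, q) \<in> Pw w \<longleftrightarrow> key p + (n + 1) < key q"
        unfolding key_def using mem_Pw_iff_key[OF assms that] .
      also have "\<dots> \<longleftrightarrow> real (key p) + real (n + 1) < real (key q)"
        by (simp only: of_nat_add[symmetric] of_nat_less_iff)
      also have "\<dots> \<longleftrightarrow> y (lab p) + 1 < y (lab q)"
        unfolding y_lab[OF that(1)] y_lab[OF that(2)] by (rule divide_add_one_less_iff[symmetric]) simp
      finally show ?thesis .
    qed
  qed
qed

lemma area_seq_pred_level:
  assumes "area_seq n w" "p \<in> {1..n}" "0 < w ! (p - 1)"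
  obtains q where "q \<in> {1..n}" "q < p" "w ! (q - 1) = w ! (p - 1) - 1"
proof -
  have w: "area_steps w" "length w = n" "w \<noteq> [] \<longrightarrow> hd w = 0" using assms(1) by (simp_all add: area_seq_iff)
  then have "w ! 0 = 0" using assms(2) by (auto simp: hd_conv_nth)
  moreover have "p - 1 < length w" using assms(2) w(2) by (simp, linarith)
  ultimately obtain s where "s < p - 1" "w ! s = w ! (p - 1) - 1"
    using area_steps_intermediate_value[OF w(1), of "p - 1" "w ! (p - 1) - 1"] assms(3) by auto
  then show ?thesis using that[of "Suc s"] assms(2) by simp
qed

text \<open>The level recursion holds in \<open>P(w)\<close> with the letters of \<open>w\<close> as levels.\<close>

lemma Max_Pw_pred_levels:
  assumes "area_seq n w" "p \<in> {1..n}"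
  shows "Max (insert 0 {Suc (w ! (q - 1)) | q. (q, p) \<in> Pw w}) = w ! (p - 1)"
proof (rule Max_eqI)
  have "{q. (q, p) \<in> Pw w} \<subseteq> {1..length w}" by (auto simp: Pw_def)
  then have "finite {q. (q, p) \<in> Pw w}" using finite_subset by blast
  then show "finite (insert 0 {Suc (w ! (q - 1)) | q. (q, p) \<in> Pw w})"
    by simp
  show "t \<le> w ! (p - 1)" if "t \<in> insert 0 {Suc (w ! (q - 1)) | q. (q, p) \<in> Pw w}" for t
    using that by (auto simp: mem_Pw_iff)
  show "w ! (p - 1) \<in> insert 0 {Suc (w ! (q - 1)) | q. (q, p) \<in> Pw w}"
  proof (cases "w ! (p - 1) = 0")
    case False
    then obtain q where q: "q \<in> {1..n}" "q < p" "w ! (q - 1) = w ! (p - 1) - 1"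
      using area_seq_pred_level[OF assms] by blast
    then have "(q, p) \<in> Pw w" using assms False by (auto simp: mem_Pw_iff area_seq_def)
    moreover have "w ! (p - 1) = Suc (w ! (q - 1))" using q(3) False by simp
    ultimately show ?thesis by blast
  qed simp
qed

context unit_interval_order
begin

lemma lev_relabel:
  assumes w: "area_seq n w" and lab: "bij_betw lab {1..n} {1..n}"
    and rel: "\<And>p q. p \<in> {1..n} \<Longrightarrow> q \<in> {1..n} \<Longrightarrow> (p, q) \<in> Pw w \<longleftrightarrow> (lab p, lab q) \<in> U"
  shows "p \<in> {1..n} \<Longrightarrow> lev U (lab p) = w ! (p - 1)"
proof (induction "lab p" arbitrary: p rule: less_induct)
  case less
  have "length w = n" using w by (simp add: area_seq_def)
  have preds: "{Suc (lev U i) | i. (i, lab p) \<in> U} = {Suc (w ! (q - 1)) | q. (q, p) \<in> Pw w}"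
  proof (intro set_eqI iffI)
    fix t assume "t \<in> {Suc (lev U i) | i. (i, lab p) \<in> U}"
    then obtain i where i: "t = Suc (lev U i)" "(i, lab p) \<in> U" by blast
    then have "i \<in> lab ` {1..n}" "i < lab p"
      using U_less[OF i(2)] bij_betw_imp_surj_on[OF lab] by auto
    then obtain q where q: "q \<in> {1..n}" "i = lab q" by blast
    then have "(q, p) \<in> Pw w" using rel[OF q(1) less.prems] i(2) by simp
    moreover have "lev U i = w ! (q - 1)" using less.hyps[of q] \<open>i < lab p\<close> q by simp
    ultimately show "t \<in> {Suc (w ! (q - 1)) | q. (q, p) \<in> Pw w}" using i(1) by blast
  next
    fix t assume "t \<in> {Suc (w ! (q - 1)) | q. (q, p) \<in> Pw w}"
    then obtain q where q: "t = Suc (w ! (q - 1))" "(q, p) \<in> Pw w" by blast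
    then have "q \<in> {1..n}" using \<open>length w = n\<close> by (simp add: mem_Pw_iff)
    then have "(lab q, lab p) \<in> U" using rel less.prems q(2) by blast
    moreover have "lev U (lab q) = w ! (q - 1)"
      using less.hyps[of q] U_less[OF calculation] \<open>q \<in> {1..n}\<close> by simp
    ultimately show "t \<in> {Suc (lev U i) | i. (i, lab p) \<in> U}" using q(1) by force
  qed
  have "1 \<le> lab p" using bij_betwE[OF lab] less.prems by fastforce
  then show ?case using lev_eq[of "lab p"] preds Max_Pw_pred_levels[OF w less.prems] by simp
qed

lemma canonical_listing_relabel:
  assumes w: "area_seq n w" and lab: "bij_betw lab {1..n} {1..n}"
    and rel: "\<And>p q. p \<in> {1..n} \<Longrightarrow> q \<in> {1..n} \<Longrightarrow> (p, q) \<in> Pw w \<longleftrightarrow> (lab p, lab q) \<in> U"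
    and ord: "\<And>p q. p \<in> {1..n} \<Longrightarrow> q \<in> {1..n} \<Longrightarrow> w ! (p - 1) = w ! (q - 1) \<Longrightarrow> p < q \<Longrightarrow> lab p < lab q"
  defines "e \<equiv> map lab [1..<Suc n]"
  shows "canonical_listing n U e \<and> map (lev U) e = w"
proof -
  have lw: "length w = n" using w by (simp add: area_seq_def)
  note e = listing_of_bij_betw[OF lab, folded e_def]
  have set_e: "set e = {1..n}" using e(2) bij_betw_imp_surj_on[OF lab] by simp
  have lev_lab: "lev U (lab p) = w ! (p - 1)" if "p \<in> {1..n}" for p
    using lev_relabel[OF w lab rel that] .
  have map_e: "map (lev U) e = w"
  proof (rule nth_equalityI)
    show "length (map (lev U) e) = length w" using lw e(3) by simp
    show "map (lev U) e ! k = w ! k" if "k < length (map (lev U) e)" for k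
    proof -
      have "k < n" using that e(3) by simp
      then have "e ! k = lab (Suc k)" using e(4)[of "Suc k"] by simp
      then show ?thesis using lev_lab[of "Suc k"] \<open>k < n\<close> e(3) by simp
    qed
  qed
  have "canonical_listing n U e"
    unfolding canonical_listing_def
  proof (intro conjI allI impI ballI)
    show "distinct e" "set e = {1..n}" "area_seq n (map (lev U) e)" using e(1) set_e map_e w by simp_all
    show "u < v" if uv: "precedes e u v" "lev U u = lev U v" for u v
    proof -
      obtain p q where "p \<in> {1..n}" "q \<in> {1..n}" "u = lab p" "v = lab q"
        using precedes_setD[OF uv(1)] e(2) by blast
      then show ?thesis using uv e(5) lev_lab ord by simp
    qed
    show "(u, v) \<in> U \<longleftrightarrow> precedes e u v"
      if uv: "u \<in> set e" "v \<in> set e" "lev U v = Suc (lev U u)" for u v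
    proof -
      obtain p q where pq: "p \<in> {1..n}" "q \<in> {1..n}" "u = lab p" "v = lab q"
        using uv(1,2) e(2) by blast
      then have "w ! (q - 1) = Suc (w ! (p - 1))" using uv(3) lev_lab by simp
      then show ?thesis using rel[OF pq(1,2)] e(5)[OF pq(1,2)] pq lw by (simp add: mem_Pw_iff)
    qed
  qed
  then show ?thesis using map_e by simp
qed

theorem canonical_listing_of_area_seq_iso:
  assumes w: "area_seq n w" and iso: "poset_iso n (Pw w) U"
  shows "\<exists>e. canonical_listing n U e \<and> map (lev U) e = w"
proof -
  have lw: "length w = n" using w by (simp add: area_seq_def)
  obtain lab and y :: "nat \<Rightarrow> real" where lab: "bij_betw lab {1..n} {1..n}"
    and ord: "\<And>p q. p \<in> {1..n} \<Longrightarrow> q \<in> {1..n} \<Longrightarrow> w ! (p - 1) = w ! (q - 1) \<Longrightarrow> p < q \<Longrightarrow> lab p < lab q"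
    and y: "\<And>i j. 1 \<le> i \<Longrightarrow> i \<le> j \<Longrightarrow> j \<le> n \<Longrightarrow> y i \<le> y j"
    and Pw_y: "\<And>p q. p \<in> {1..n} \<Longrightarrow> q \<in> {1..n} \<Longrightarrow> (p, q) \<in> Pw w \<longleftrightarrow> y (lab p) + 1 < y (lab q)"
    using Pw_unit_interval_representation[OF lw] by blast
  define V where "V = {(i, j). i \<in> {1..n} \<and> j \<in> {1..n} \<and> y i + 1 < y j}"
  have V: "unit_interval_order n V y" by unfold_locales (use y in \<open>simp_all add: V_def\<close>)
  have Pw_V: "(p, q) \<in> Pw w \<longleftrightarrow> (lab p, lab q) \<in> V" if "p \<in> {1..n}" "q \<in> {1..n}" for p q
    using Pw_y[OF that] bij_betwE[OF lab] that by (auto simp: V_def)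
  have "poset_iso n V U"
  proof -
    obtain f where f: "bij_betw f {1..n} {1..n}"
      and fU: "\<forall>p\<in>{1..n}. \<forall>q\<in>{1..n}. (p, q) \<in> Pw w \<longleftrightarrow> (f p, f q) \<in> U"
      using iso unfolding poset_iso_def by blast
    let ?g = "f \<circ> inv_into {1..n} lab"
    have "bij_betw ?g {1..n} {1..n}" using bij_betw_trans[OF bij_betw_inv_into[OF lab] f] .
    moreover have "(i, j) \<in> V \<longleftrightarrow> (?g i, ?g j) \<in> U" if "i \<in> {1..n}" "j \<in> {1..n}" for i j
      using Pw_V[of "inv_into {1..n} lab i" "inv_into {1..n} lab j"] fU that
        bij_betw_inv_into_right[OF lab] bij_betwE[OF bij_betw_inv_into[OF lab]] by auto
    ultimately show ?thesis unfolding poset_iso_def by blast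
  qed
  then have "V = U" by (rule unit_interval_order_iso_eq[OF V unit_interval_order_axioms])
  then show ?thesis using canonical_listing_relabel[OF w lab _ ord] Pw_V by blast
qed

end

theorem mainTheorem6:
  fixes n :: nat and U :: "(nat \<times> nat) set"
  assumes "U \<in> unit_interval_orders n"
  shows "(\<exists>!w. area_seq n w \<and> poset_iso n (Pw w) U) \<and>
         area_seq n (qU n U) \<and> poset_iso n (Pw (qU n U)) U"
proof -
  obtain x where U: "unit_interval_order n U x" using assms unit_interval_orders_iff by blast
  obtain e where e: "canonical_listing n U e" "map (lev U) e = qU n U"
    using unit_interval_order.canonical_listing_exists[OF U order_refl] by (auto simp: qU_def)
  have q: "area_seq n (qU n U)" "poset_iso n (Pw (qU n U)) U"
    using e unit_interval_order.canonical_listing_iso[OF U e(1)] by (auto simp: canonical_listing_def)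
  have "w = qU n U" if "area_seq n w" "poset_iso n (Pw w) U" for w
    using unit_interval_order.canonical_listing_of_area_seq_iso[OF U that]
      unit_interval_order.canonical_listing_level_word[OF U] by metis
  with q show ?thesis by blast
qed

end
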